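(* Let $v$ and $k\ge 2$ be powers of the same prime. Then there exists an $\mathrm{RBIBD}(v,k,1)$ (and hence a $(k,r)$-regular LDPC code of length $vr/k$ and rate at least $(r-k)/r$ based on it, where $r=(v-1)/(k-1)$) if and only if $v-1\equiv 0 \pmod{k-1}$ and $v\equiv 0 \pmod{k}$.
   Context: A $\mathrm{BIBD}(v,k,\lambda)$ is a pair $(X,\mathcal{B})$ where $X$ is a set of $v$ points and $\mathcal{B}$ a collection of $k$-subsets (blocks) such that every pair of distinct points lies in exactly $\lambda$ blocks; each point then lies in the same number $r$ of blocks, with $\lambda(v-1)=r(k-1)$ and $bk=vr$ where $b=|\mathcal{B}|$. It is resolvable, written $\mathrm{RBIBD}(v,k,\lambda)$, if $\mathcal{B}$ can be partitioned into classes each of which partitions $X$. The LDPC code based on the design is the binary linear code having the $v\times b$ point-block incidence matrix as parity-check matrix $H$. The code is $(k,r)$-regular if all columns of $H$ have weight $k$ and all rows weight $r$; its rate is $(b-\mathrm{rank}_2(H))/b$, with $b$ the length. *)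

theory Defs
  imports "HOL-Computational_Algebra.Primes"
begin

text \<open>Blocks are modelled as a set of sets; for lambda = 1 and k >= 2
  a repeated block is impossible anyway.\<close>
definition bibd :: "'a set \<Rightarrow> 'a set set \<Rightarrow> nat \<Rightarrow> nat \<Rightarrow> nat \<Rightarrow> bool" where
  "bibd X B v k lam \<longleftrightarrow>
     finite X \<and> card X = v \<and>
     (\<forall>b\<in>B. b \<subseteq> X \<and> card b = k) \<and>
     (\<forall>x\<in>X. \<forall>y\<in>X. x \<noteq> y \<longrightarrow> card {b\<in>B. x \<in> b \<and> y \<in> b} = lam)"

definition partitions_points :: "'a set \<Rightarrow> 'a set set \<Rightarrow> bool" where
  "partitions_points X C \<longleftrightarrow>
     (\<forall>c\<in>C. c \<subseteq> X) \<and> (\<forall>x\<in>X. \<exists>!c. c \<in> C \<and> x \<in> c)"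

definition resolvable :: "'a set \<Rightarrow> 'a set set \<Rightarrow> bool" where
  "resolvable X B \<longleftrightarrow>
     (\<exists>P :: 'a set set set.
        (\<forall>C\<in>P. C \<subseteq> B \<and> partitions_points X C) \<and>
        (\<forall>b\<in>B. \<exists>!C. C \<in> P \<and> b \<in> C))"

definition rbibd :: "'a set \<Rightarrow> 'a set set \<Rightarrow> nat \<Rightarrow> nat \<Rightarrow> nat \<Rightarrow> bool" where
  "rbibd X B v k lam \<longleftrightarrow> bibd X B v k lam \<and> resolvable X B"

end

(*
  Necessity is double counting: the blocks through a point partition the other v - 1 points
  into sets of size k - 1, and a parallel class partitions the v points into blocks of size k.

  Sufficiency: (p^c - 1) dvd (p^a - 1) forces c dvd a, so GF(p^c) is a subfield of GF(p^a).
  Both fields are found inside an algebraic closure of Z/p as the fixed points of x |-> x^(p^c)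
  and x |-> x^(p^a): these sets are subfields by the Frobenius identity (x + y)^p = x^p + y^p,
  and they have the right size because X^q - X splits into distinct linear factors.  The affine
  lines x + GF(p^c) d (d \<noteq> 0) of GF(p^a) form an RBIBD(p^a, p^c, 1) whose parallel classes
  are the lines sharing a direction d.
*)
theory Submission
  imports Defs "HOL-Algebra.Algebraic_Closure" "HOL-Number_Theory.Residues"
begin

(* The theorem uses X as a variable name and means the prime of Factorial_Ring. *)
no_notation var (\<open>X\<index>\<close>)
hide_const (open) Divisibility.prime

section \<open>Necessary conditions\<close>

lemma bibd_blocks_through_point:
  assumes "bibd X B v k 1" and "x \<in> X"
  shows "v - 1 = card {b\<in>B. x \<in> b} * (k - 1)"
proof -
  have fin: "finite X" and cX: "card X = v" and blk: "\<And>b. b \<in> B \<Longrightarrow> b \<subseteq> X \<and> card b = k"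
    and pair: "\<And>y z. y \<in> X \<Longrightarrow> z \<in> X \<Longrightarrow> y \<noteq> z \<Longrightarrow> card {b\<in>B. y \<in> b \<and> z \<in> b} = 1"
    using assms(1) by (auto simp: bibd_def)
  define Bx where "Bx = {b\<in>B. x \<in> b}"
  have finB: "finite B"
    using blk fin by (intro finite_subset[of B "Pow X"]) auto
  have cover: "X - {x} = (\<Union>b\<in>Bx. b - {x})"
  proof (intro equalityI subsetI)
    fix z assume z: "z \<in> X - {x}"
    then have "card {b\<in>B. x \<in> b \<and> z \<in> b} = 1" using pair assms(2) by auto
    then obtain b where "{b\<in>B. x \<in> b \<and> z \<in> b} = {b}" by (rule card_1_singletonE)
    then show "z \<in> (\<Union>b\<in>Bx. b - {x})" using z by (auto simp: Bx_def)
  qed (use blk in \<open>auto simp: Bx_def\<close>)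
  have disjoint: "(b - {x}) \<inter> (b' - {x}) = {}" if "b \<in> Bx" "b' \<in> Bx" "b \<noteq> b'" for b b'
  proof (rule ccontr)
    assume "(b - {x}) \<inter> (b' - {x}) \<noteq> {}"
    then obtain z where z: "z \<in> b" "z \<in> b'" "z \<noteq> x" by blast
    have "card {b, b'} \<le> card {c\<in>B. x \<in> c \<and> z \<in> c}"
      using that z finB by (intro card_mono) (auto simp: Bx_def)
    moreover have "z \<in> X" using z that blk by (auto simp: Bx_def)
    ultimately show False using pair[of x z] z assms(2) that(3) by simp
  qed
  have "card (X - {x}) = (\<Sum>b\<in>Bx. card (b - {x}))"
    unfolding cover using finB fin blk disjoint
    by (intro card_UN_disjoint) (auto simp: Bx_def intro: rev_finite_subset)
  also have "\<dots> = card Bx * (k - 1)"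
    using blk by (simp add: Bx_def)
  finally show ?thesis using cX assms(2) fin by (simp add: Bx_def)
qed

lemma resolvable_block_size_dvd:
  assumes "resolvable X B" and "finite X" and "\<And>b. b \<in> B \<Longrightarrow> card b = k" and "B \<noteq> {}"
  shows "k dvd card X"
proof -
  obtain P where P: "\<forall>C\<in>P. C \<subseteq> B \<and> partitions_points X C"
    and covers: "\<forall>b\<in>B. \<exists>!C. C \<in> P \<and> b \<in> C"
    using assms(1) unfolding resolvable_def by auto
  obtain b where "b \<in> B" using assms(4) by blast
  then obtain C where "C \<in> P" using covers by auto
  then have CB: "C \<subseteq> B" and sub: "\<forall>c\<in>C. c \<subseteq> X" and uniq: "\<forall>x\<in>X. \<exists>!c. c \<in> C \<and> x \<in> c"
    using P by (auto simp: partitions_points_def)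
  have "X = \<Union>C" using sub uniq by auto
  moreover have "pairwise disjnt C"
    unfolding pairwise_def disjnt_def
  proof (intro ballI impI)
    fix c c' assume "c \<in> C" "c' \<in> C" "c \<noteq> c'"
    then show "c \<inter> c' = {}" using uniq sub by auto
  qed
  moreover have "finite c" if "c \<in> C" for c
    using that sub assms(2) rev_finite_subset by blast
  ultimately have "card X = sum card C"
    by (simp add: card_Union_disjoint)
  also have "\<dots> = card C * k" using CB assms(3) by (simp add: subset_eq)
  finally show ?thesis by simp
qed

lemma rbibd_necessary_conditions:
  assumes "rbibd X B v k 1" and "v \<ge> 2"
  shows "(v - 1) mod (k - 1) = 0 \<and> v mod k = 0"
proof -
  have bibd: "bibd X B v k 1" and res: "resolvable X B"
    and fin: "finite X" and card: "card X = v" and blocks: "\<And>b. b \<in> B \<Longrightarrow> card b = k"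
    using assms(1) by (auto simp: rbibd_def bibd_def)
  have "X \<noteq> {}" using card assms(2) by auto
  then obtain x where x: "x \<in> X" by blast
  have r: "v - 1 = card {b\<in>B. x \<in> b} * (k - 1)"
    by (rule bibd_blocks_through_point[OF bibd x])
  then have "card {b\<in>B. x \<in> b} \<noteq> 0" using assms(2) by (cases "card {b\<in>B. x \<in> b}") simp_all
  then have "B \<noteq> {}" by auto
  then have "k dvd v" using resolvable_block_size_dvd[OF res fin blocks] card by simp
  then show ?thesis using r by simp
qed

lemma power_minus_one_dvd_imp_dvd:
  fixes x a c :: nat
  assumes "x \<ge> 2" and "(x ^ c - 1) dvd (x ^ a - 1)"
  shows "c dvd a"
proof (cases "c = 0")
  case True
  then have "x ^ a \<le> 1" using assms(2) by simp
  then have "a = 0" using assms(1) power_le_one_iff[of x a] by simp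
  then show ?thesis by simp
next
  case False
  define M where "M = x ^ c - 1"
  define r where "r = a mod c"
  have pos: "1 \<le> x ^ n" for n using assms(1) by simp
  have "[x ^ c = 1] (mod M)"
    using pos by (simp add: M_def cong_altdef_nat)
  then have "[(x ^ c) ^ (a div c) * x ^ r = 1 ^ (a div c) * x ^ r] (mod M)"
    by (intro cong_mult cong_pow) auto
  moreover have "(x ^ c) ^ (a div c) * x ^ r = x ^ (c * (a div c) + a mod c)"
    by (simp only: r_def power_add power_mult)
  ultimately have "[x ^ a = x ^ r] (mod M)" by simp
  moreover have "[x ^ a = 1] (mod M)"
    using assms(2) pos by (simp add: M_def cong_altdef_nat)
  ultimately have "[x ^ r = 1] (mod M)" by (meson cong_sym cong_trans)
  then have "M dvd x ^ r - 1" using pos by (simp add: cong_altdef_nat)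
  moreover have "x ^ r - 1 < M"
    using assms(1) False by (simp add: M_def r_def diff_less_mono)
  ultimately have "x ^ r - 1 = 0"
    using nat_dvd_not_less by blast
  then have "r = 0" using assms(1) power_le_one_iff[of x r] by simp
  then show ?thesis by (simp add: r_def mod_eq_0_iff_dvd)
qed

lemma prime_power_ge_2:
  fixes p :: nat
  assumes "prime p" and "m \<ge> 1"
  shows "p ^ m \<ge> 2"
  using power_increasing[of 1 m p] assms prime_ge_2_nat[OF assms(1)] by simp

section \<open>Transport along an injection\<close>

lemma bibd_image:
  assumes "inj_on f X" and "bibd X B v k l"
  shows "bibd (f ` X) (image f ` B) v k l"
proof -
  have fin: "finite X" and cX: "card X = v" and blk: "\<And>b. b \<in> B \<Longrightarrow> b \<subseteq> X \<and> card b = k"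
    and pair: "\<And>x y. x \<in> X \<Longrightarrow> y \<in> X \<Longrightarrow> x \<noteq> y \<Longrightarrow> card {b\<in>B. x \<in> b \<and> y \<in> b} = l"
    using assms(2) by (auto simp: bibd_def)
  have mem: "f z \<in> f ` b \<longleftrightarrow> z \<in> b" if "b \<in> B" "z \<in> X" for b z
    using inj_on_image_mem_iff[OF assms(1) that(2)] blk[OF that(1)] by simp
  have inj_blocks: "inj_on (image f) B"
    using inj_on_subset[OF inj_on_image_Pow[OF assms(1)]] blk by blast
  have pair': "card {b'\<in>image f ` B. f x \<in> b' \<and> f y \<in> b'} = l"
    if "x \<in> X" "y \<in> X" "x \<noteq> y" for x y
  proof -
    have "{b'\<in>image f ` B. f x \<in> b' \<and> f y \<in> b'} = image f ` {b\<in>B. x \<in> b \<and> y \<in> b}"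
    proof (intro equalityI subsetI)
      fix b' assume "b' \<in> {b'\<in>image f ` B. f x \<in> b' \<and> f y \<in> b'}"
      then obtain b where "b \<in> B" "b' = f ` b" "f x \<in> f ` b" "f y \<in> f ` b" by blast
      moreover have "x \<in> b" "y \<in> b" using calculation mem that by simp_all
      ultimately show "b' \<in> image f ` {b\<in>B. x \<in> b \<and> y \<in> b}" by blast
    qed blast
    also have "card \<dots> = l"
      using pair[OF that] inj_on_subset[OF inj_blocks] by (simp add: card_image)
    finally show ?thesis .
  qed
  show ?thesis
    unfolding bibd_def
  proof (intro conjI ballI impI)
    show "card (f ` X) = v" using card_image[OF assms(1)] cX by simp
    fix b' assume "b' \<in> image f ` B"
    then obtain b where "b \<in> B" "b' = f ` b" by blast
    then show "b' \<subseteq> f ` X" "card b' = k"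
      using blk card_image[OF inj_on_subset[OF assms(1)]] by auto
  next
    fix x' y' assume "x' \<in> f ` X" "y' \<in> f ` X" "x' \<noteq> y'"
    then obtain x y where "x \<in> X" "y \<in> X" "x \<noteq> y" "x' = f x" "y' = f y" by blast
    then show "card {b'\<in>image f ` B. x' \<in> b' \<and> y' \<in> b'} = l" using pair' by simp
  qed (use fin in simp)
qed

lemma partitions_points_image:
  assumes "inj_on f X" and "partitions_points X C"
  shows "partitions_points (f ` X) (image f ` C)"
  unfolding partitions_points_def
proof (intro conjI ballI)
  have sub: "\<And>c. c \<in> C \<Longrightarrow> c \<subseteq> X" and uniq: "\<And>x. x \<in> X \<Longrightarrow> \<exists>!c. c \<in> C \<and> x \<in> c"
    using assms(2) by (auto simp: partitions_points_def)
  show "c' \<subseteq> f ` X" if "c' \<in> image f ` C" for c'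
    using that sub by blast
  fix y assume "y \<in> f ` X"
  then obtain x where x: "x \<in> X" "y = f x" by blast
  obtain c where c: "c \<in> C" "x \<in> c" using uniq[OF x(1)] by blast
  show "\<exists>!c'. c' \<in> image f ` C \<and> y \<in> c'"
  proof (rule ex1I[of _ "f ` c"])
    fix c' assume "c' \<in> image f ` C \<and> y \<in> c'"
    then obtain c1 where c1: "c1 \<in> C" "c' = f ` c1" "f x \<in> f ` c1"
      using x by auto
    then have "x \<in> c1" using inj_on_image_mem_iff[OF assms(1) x(1) sub] by blast
    then show "c' = f ` c" using uniq[OF x(1)] c c1 by blast
  qed (use c x in blast)
qed

lemma resolvable_image:
  assumes "inj_on f X" and "resolvable X B"
  shows "resolvable (f ` X) (image f ` B)"
proof -
  obtain P where P: "\<forall>C\<in>P. C \<subseteq> B \<and> partitions_points X C"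
    and covers: "\<forall>b\<in>B. \<exists>!C. C \<in> P \<and> b \<in> C"
    using assms(2) unfolding resolvable_def by auto
  have in_class: "\<exists>C. C \<in> P \<and> b \<in> C" and class_unique: "\<And>C C'. C \<in> P \<Longrightarrow> b \<in> C \<Longrightarrow> C' \<in> P \<Longrightarrow> b \<in> C' \<Longrightarrow> C = C'"
    if "b \<in> B" for b
    using covers that by auto
  have blk: "b \<subseteq> X" if b: "b \<in> B" for b
  proof -
    obtain C where "C \<in> P" "b \<in> C" using in_class[OF b] by blast
    then show ?thesis using P by (simp add: partitions_points_def)
  qed
  show ?thesis
    unfolding resolvable_def
  proof (intro exI[of _ "(\<lambda>C. image f ` C) ` P"] conjI ballI)
    fix C' assume "C' \<in> (\<lambda>C. image f ` C) ` P"
    then show "C' \<subseteq> image f ` B" "partitions_points (f ` X) C'"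
      using P partitions_points_image[OF assms(1)] by blast+
  next
    fix b' assume "b' \<in> image f ` B"
    then obtain b where b: "b \<in> B" and b': "b' = f ` b" by blast
    obtain C where C: "C \<in> P" "b \<in> C" using in_class[OF b] by blast
    show "\<exists>!C'. C' \<in> (\<lambda>C. image f ` C) ` P \<and> b' \<in> C'"
    proof (rule ex1I[of _ "image f ` C"])
      show "image f ` C \<in> (\<lambda>C. image f ` C) ` P \<and> b' \<in> image f ` C"
        using C b' by auto
    next
      fix C' assume C': "C' \<in> (\<lambda>C. image f ` C) ` P \<and> b' \<in> C'"
      then obtain C1 where C1: "C1 \<in> P" "C' = image f ` C1" by blast
      then have "f ` b \<in> image f ` C1" using C' b' by simp
      then obtain b1 where b1: "f ` b = f ` b1" "b1 \<in> C1" by (rule imageE)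
      have "b1 \<in> B" using P C1(1) b1(2) by blast
      then have "b1 = b"
        using inj_onD[OF inj_on_image_Pow[OF assms(1)] b1(1)] blk b by simp
      then have "C1 = C" using class_unique[OF b C1(1) _ C] b1(2) by simp
      then show "C' = image f ` C" using C1(2) by simp
    qed
  qed
qed

lemma rbibd_image:
  assumes "inj_on f X" and "rbibd X B v k l"
  shows "rbibd (f ` X) (image f ` B) v k l"
  using assms bibd_image[OF assms(1)] resolvable_image[OF assms(1)] by (simp add: rbibd_def)

section \<open>The Frobenius map\<close>

lemma (in cring) binomial_expansion:
  assumes x: "x \<in> carrier R" and y: "y \<in> carrier R"
  shows "(x \<oplus> y) [^] n = (\<Oplus>i \<in> {..n}. [(n choose i)] \<cdot> (x [^] i \<otimes> y [^] (n - i)))"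
proof (induction n)
  case 0
  then show ?case using x y by simp
next
  case (Suc n)
  define m where "m i = x [^] i \<otimes> y [^] (Suc n - i)" for i
  define c where "c i = (if i = 0 then 0 else n choose (i - 1))" for i
  have m: "m \<in> UNIV \<rightarrow> carrier R" using x y by (simp add: m_def)
  have "(\<Oplus>i \<in> {..n}. [(n choose i)] \<cdot> (x [^] i \<otimes> y [^] (n - i))) \<otimes> x
      = (\<Oplus>i \<in> {..n}. [(n choose i)] \<cdot> (x [^] i \<otimes> y [^] (n - i)) \<otimes> x)"
    using x y by (simp add: finsum_ldistr)
  also have "\<dots> = (\<Oplus>i \<in> {..n}. [c (Suc i)] \<cdot> m (Suc i))"
    using x y by (intro finsum_cong') (auto simp: c_def m_def add_pow_ldistr add_pow_rdistr m_assoc m_comm m_lcomm)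
  also have "\<dots> = (\<Oplus>i \<in> {..Suc n}. [c i] \<cdot> m i)"
  proof -
    have "(\<Oplus>i \<in> {..n}. [c (Suc i)] \<cdot> m (Suc i)) \<in> carrier R"
      using m by (intro finsum_closed) auto
    then show ?thesis using m by (subst finsum_Suc2) (auto simp: c_def)
  qed
  finally have sum_x: "(\<Oplus>i \<in> {..n}. [(n choose i)] \<cdot> (x [^] i \<otimes> y [^] (n - i))) \<otimes> x
      = (\<Oplus>i \<in> {..Suc n}. [c i] \<cdot> m i)" .
  have "(\<Oplus>i \<in> {..n}. [(n choose i)] \<cdot> (x [^] i \<otimes> y [^] (n - i))) \<otimes> y
      = (\<Oplus>i \<in> {..n}. [(n choose i)] \<cdot> (x [^] i \<otimes> y [^] (n - i)) \<otimes> y)"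
    using x y by (simp add: finsum_ldistr)
  also have "\<dots> = (\<Oplus>i \<in> {..n}. [(n choose i)] \<cdot> m i)"
    using x y by (intro finsum_cong') (auto simp: m_def add_pow_ldistr m_assoc Suc_diff_le)
  also have "\<dots> = (\<Oplus>i \<in> {..Suc n}. [(n choose i)] \<cdot> m i)"
  proof -
    have "(\<Oplus>i \<in> {..n}. [(n choose i)] \<cdot> m i) \<in> carrier R"
      using m by (intro finsum_closed) auto
    then show ?thesis using m by (subst finsum_Suc) (auto simp: binomial_eq_0)
  qed
  finally have sum_y: "(\<Oplus>i \<in> {..n}. [(n choose i)] \<cdot> (x [^] i \<otimes> y [^] (n - i))) \<otimes> y
      = (\<Oplus>i \<in> {..Suc n}. [(n choose i)] \<cdot> m i)" .
  have "(x \<oplus> y) [^] Suc n = (x \<oplus> y) [^] n \<otimes> (x \<oplus> y)" by simp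
  also have "\<dots> = (\<Oplus>i \<in> {..Suc n}. [c i] \<cdot> m i) \<oplus> (\<Oplus>i \<in> {..Suc n}. [(n choose i)] \<cdot> m i)"
    using x y by (simp add: Suc r_distr sum_x sum_y)
  also have "\<dots> = (\<Oplus>i \<in> {..Suc n}. [c i] \<cdot> m i \<oplus> [(n choose i)] \<cdot> m i)"
    using m by (intro finsum_addf[symmetric]) auto
  also have "\<dots> = (\<Oplus>i \<in> {..Suc n}. [(Suc n choose i)] \<cdot> m i)"
  proof (intro finsum_cong')
    fix i
    have "c i + (n choose i) = Suc n choose i" by (cases i) (simp_all add: c_def)
    then show "[c i] \<cdot> m i \<oplus> [(n choose i)] \<cdot> m i = [(Suc n choose i)] \<cdot> m i"
      using add.nat_pow_mult[of "m i" "c i" "n choose i"] m by auto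
  qed (use m in auto)
  finally show ?case by (simp add: m_def)
qed

lemma (in ring) add_pow_eq_zero_if_char_dvd:
  fixes p n :: nat
  assumes "[p] \<cdot> \<one> = \<zero>" and "p dvd n" and "z \<in> carrier R"
  shows "[n] \<cdot> z = \<zero>"
proof -
  obtain t where n: "n = p * t" using assms(2) by blast
  have "[n] \<cdot> z = ([n] \<cdot> \<one>) \<otimes> z" using add_pow_ldistr[of \<one> z n] assms(3) by simp
  also have "[n] \<cdot> \<one> = [t] \<cdot> ([p] \<cdot> \<one>)" by (simp add: n add.nat_pow_pow)
  finally show ?thesis using assms(1,3) by simp
qed

lemma (in cring) frobenius_add:
  fixes p :: nat
  assumes "prime p" and "[p] \<cdot> \<one> = \<zero>" and x: "x \<in> carrier R" and y: "y \<in> carrier R"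
  shows "(x \<oplus> y) [^] p = x [^] p \<oplus> y [^] p"
proof -
  define t where "t i = [(p choose i)] \<cdot> (x [^] i \<otimes> y [^] (p - i))" for i
  have t: "t \<in> UNIV \<rightarrow> carrier R" using x y by (simp add: t_def)
  have "p \<noteq> 0" using assms(1) by auto
  have "(x \<oplus> y) [^] p = (\<Oplus>i \<in> {..p}. t i)" using binomial_expansion[OF x y] by (simp add: t_def)
  also have "\<dots> = (\<Oplus>i \<in> {0, p}. t i)"
  proof (rule add.finprod_mono_neutral_cong_left[symmetric])
    show "t i = \<zero>" if "i \<in> {..p} - {0, p}" for i
    proof -
      have "p dvd (p choose i)" using that dvd_choose_prime[of i p] assms(1) by auto
      then show ?thesis using add_pow_eq_zero_if_char_dvd[OF assms(2)] x y by (simp add: t_def)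
    qed
  qed (use t in auto)
  also have "\<dots> = x [^] p \<oplus> y [^] p"
    using t x y \<open>p \<noteq> 0\<close> by (simp add: t_def a_comm)
  finally show ?thesis .
qed

lemma (in cring) frobenius_pow_add:
  fixes p :: nat
  assumes "prime p" and "[p] \<cdot> \<one> = \<zero>" and x: "x \<in> carrier R" and y: "y \<in> carrier R"
  shows "(x \<oplus> y) [^] (p ^ m) = x [^] (p ^ m) \<oplus> y [^] (p ^ m)"
proof (induction m)
  case (Suc m)
  have "(x \<oplus> y) [^] (p ^ Suc m) = ((x \<oplus> y) [^] (p ^ m)) [^] p"
    using x y by (simp add: nat_pow_pow mult.commute)
  also have "\<dots> = (x [^] (p ^ m)) [^] p \<oplus> (y [^] (p ^ m)) [^] p"
    using Suc frobenius_add[OF assms(1,2)] x y by simp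
  also have "\<dots> = x [^] (p ^ Suc m) \<oplus> y [^] (p ^ Suc m)"
    using x y by (simp add: nat_pow_pow mult.commute)
  finally show ?case .
qed (use x y in simp)

lemma (in cring) frobenius_pow_diff:
  fixes p :: nat
  assumes "prime p" and "[p] \<cdot> \<one> = \<zero>" and x: "x \<in> carrier R" and y: "y \<in> carrier R"
  shows "(x \<ominus> y) [^] (p ^ m) = x [^] (p ^ m) \<ominus> y [^] (p ^ m)"
proof -
  have "x [^] (p ^ m) = ((x \<ominus> y) \<oplus> y) [^] (p ^ m)"
    using x y by (simp add: a_minus_def a_assoc l_neg)
  also have "\<dots> = (x \<ominus> y) [^] (p ^ m) \<oplus> y [^] (p ^ m)"
    using frobenius_pow_add[OF assms(1,2)] x y by simp
  finally show ?thesis using x y by (simp add: a_minus_def a_assoc r_neg)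
qed

definition pow_fixed :: "('a, 'b) monoid_scheme \<Rightarrow> nat \<Rightarrow> 'a set" where
  "pow_fixed G n = {x \<in> carrier G. x [^]\<^bsub>G\<^esub> n = x}"

lemma (in monoid) pow_fixed_subset_power:
  "pow_fixed G n \<subseteq> pow_fixed G (n ^ j)"
proof
  fix x assume x: "x \<in> pow_fixed G n"
  have "x [^] (n ^ j) = x" for j
  proof (induction j)
    case (Suc j)
    have "x [^] (n ^ Suc j) = (x [^] (n ^ j)) [^] n"
      using x by (simp add: nat_pow_pow mult.commute pow_fixed_def)
    then show ?case using Suc x by (simp add: pow_fixed_def)
  qed (use x in \<open>simp add: pow_fixed_def\<close>)
  then show "x \<in> pow_fixed G (n ^ j)" using x by (simp add: pow_fixed_def)
qed

lemma (in field) subfield_pow_fixed: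
  fixes p :: nat
  assumes "prime p" and "[p] \<cdot> \<one> = \<zero>"
  shows "subfield (pow_fixed R (p ^ m)) R"
proof (rule subfieldI'[OF subringI])
  have "p ^ m \<noteq> 0" using assms(1) by auto
  then have zero: "\<zero> [^] (p ^ m) = \<zero>" by (rule nat_pow_zero)
  show "pow_fixed R (p ^ m) \<subseteq> carrier R" "\<one> \<in> pow_fixed R (p ^ m)"
    by (auto simp: pow_fixed_def)
  show "\<ominus> x \<in> pow_fixed R (p ^ m)" if "x \<in> pow_fixed R (p ^ m)" for x
    using that frobenius_pow_diff[OF assms zero_closed, of x m] zero
    by (simp add: pow_fixed_def a_minus_def)
  show "x \<otimes> y \<in> pow_fixed R (p ^ m)" "x \<oplus> y \<in> pow_fixed R (p ^ m)"
    if "x \<in> pow_fixed R (p ^ m)" "y \<in> pow_fixed R (p ^ m)" for x y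
    using that frobenius_pow_add[OF assms] by (auto simp: pow_fixed_def nat_pow_distrib)
  show "inv x \<in> pow_fixed R (p ^ m)" if "x \<in> pow_fixed R (p ^ m) - {\<zero>}" for x
  proof -
    have x: "x \<in> carrier R" "x \<noteq> \<zero>" "x [^] (p ^ m) = x" using that by (auto simp: pow_fixed_def)
    then have "x \<in> Units R" using field_Units by blast
    then have inv: "inv x \<in> carrier R" "x \<otimes> inv x = \<one>"
      by (rule Units_inv_closed, rule Units_r_inv)
    have "x \<otimes> inv x [^] (p ^ m) = x [^] (p ^ m) \<otimes> inv x [^] (p ^ m)" using x by simp
    also have "\<dots> = (x \<otimes> inv x) [^] (p ^ m)" by (rule nat_pow_distrib[OF x(1) inv(1), symmetric])
    also have "\<dots> = \<one>" using inv by simp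
    finally have "inv x = inv x [^] (p ^ m)"
      by (rule comm_inv_char[OF x(1) nat_pow_closed[OF inv(1)]])
    then show ?thesis using inv by (simp add: pow_fixed_def)
  qed
qed

section \<open>Fixed points of the Frobenius map in an algebraically closed field\<close>

lemma size_eq_card_set_mset:
  assumes "\<And>x. count M x \<le> 1"
  shows "size M = card (set_mset M)"
proof -
  have "M = mset_set (set_mset M)"
  proof (rule multiset_eqI)
    fix x
    show "count M x = count (mset_set (set_mset M)) x"
      using assms[of x] count_greater_zero_iff[of M x]
      by (cases "count M x") (auto simp: count_mset_set not_in_iff)
  qed
  then show ?thesis by (metis size_mset_set)
qed

lemma ring_hom_add_pow_one:
  assumes "ring_hom_ring R S h"
  shows "h ([(n::nat)] \<cdot>\<^bsub>R\<^esub> \<one>\<^bsub>R\<^esub>) = [n] \<cdot>\<^bsub>S\<^esub> \<one>\<^bsub>S\<^esub>"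
proof -
  interpret ring_hom_ring R S h by fact
  show ?thesis by (induction n) (simp_all add: R.add.nat_pow_Suc S.add.nat_pow_Suc)
qed

lemma (in domain) poly_ring_char:
  assumes "[(p::nat)] \<cdot> \<one> = \<zero>"
  shows "[p] \<cdot>\<^bsub>poly_ring R\<^esub> \<one>\<^bsub>poly_ring R\<^esub> = \<zero>\<^bsub>poly_ring R\<^esub>"
proof -
  have "ring_hom_ring R (poly_ring R) poly_of_const"
    using canonical_embedding_ring_hom[OF carrier_is_subring] by simp
  from ring_hom_add_pow_one[OF this, of p] show ?thesis
    using assms by (simp add: poly_of_const_def univ_poly_zero)
qed

lemma (in domain) square_not_dvd_pow_minus_self:
  assumes Y: "Y \<in> carrier R" "Y \<noteq> \<zero>" and Q: "Q \<in> carrier R" and "k \<ge> 1"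
    and h: "ring_hom_ring R S h" "h Y = \<zero>\<^bsub>S\<^esub>" and S: "\<one>\<^bsub>S\<^esub> \<noteq> \<zero>\<^bsub>S\<^esub>"
  shows "Y [^] (2::nat) \<otimes> Q \<noteq> Y [^] Suc k \<ominus> Y"
proof
  assume eq: "Y [^] (2::nat) \<otimes> Q = Y [^] Suc k \<ominus> Y"
  have factor: "Y \<otimes> B \<ominus> Y = Y \<otimes> (B \<ominus> \<one>)" if "B \<in> carrier R" for B
    using that Y by algebra
  have "Y \<otimes> (Y \<otimes> Q) = Y [^] (2::nat) \<otimes> Q"
    using Y Q by (simp add: numeral_2_eq_2 m_assoc)
  also have "\<dots> = Y \<otimes> Y [^] k \<ominus> Y"
    using eq Y by (simp add: m_comm)
  also have "\<dots> = Y \<otimes> (Y [^] k \<ominus> \<one>)"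
    using Y by (simp add: factor)
  finally have "Y \<otimes> (Y \<otimes> Q) = Y \<otimes> (Y [^] k \<ominus> \<one>)" .
  then have "Y \<otimes> Q = Y [^] k \<ominus> \<one>"
    using m_lcancel Y Q by simp
  then have "h (Y \<otimes> Q) = h (Y [^] k \<ominus> \<one>)" by simp
  interpret ring_hom_ring R S h by (rule h(1))
  have "h (Y \<otimes> Q) = \<zero>\<^bsub>S\<^esub>" using Y Q h(2) by simp
  moreover have "h (Y [^] k \<ominus> \<one>) = \<ominus>\<^bsub>S\<^esub> \<one>\<^bsub>S\<^esub>"
    using Y h(2) \<open>k \<ge> 1\<close> by (simp add: a_minus_def hom_nat_pow S.nat_pow_zero)
  ultimately show False using \<open>h (Y \<otimes> Q) = h (Y [^] k \<ominus> \<one>)\<close> S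
    by (metis S.minus_minus S.minus_zero S.one_closed)
qed

definition (in ring) X_pow_minus_X :: "nat \<Rightarrow> 'a list" where
  "X_pow_minus_X n = [\<one>, \<zero>] [^]\<^bsub>poly_ring R\<^esub> n \<ominus>\<^bsub>poly_ring R\<^esub> [\<one>, \<zero>]"

context field
begin

lemma X_poly_closed: "[\<one>, \<zero>] \<in> carrier (poly_ring R)"
  by (simp add: univ_poly_carrier[symmetric] polynomial_def)

lemma X_pow_minus_X_closed: "X_pow_minus_X n \<in> carrier (poly_ring R)"
proof -
  interpret U: domain "poly_ring R" by (rule univ_poly_is_domain[OF carrier_is_subring])
  show ?thesis using X_poly_closed by (simp add: X_pow_minus_X_def)
qed

lemma eval_X_pow_minus_X:
  assumes "x \<in> carrier R"
  shows "eval (X_pow_minus_X n) x = x [^] n \<ominus> x"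
proof -
  interpret E: ring_hom_cring "poly_ring R" R "\<lambda>p. eval p x"
    by (rule eval_cring_hom[OF carrier_is_subring assms])
  show ?thesis
    using X_poly_closed assms by (simp add: X_pow_minus_X_def a_minus_def E.ring.hom_nat_pow)
qed

lemma degree_X_pow_minus_X:
  assumes "n \<ge> 2"
  shows "degree (X_pow_minus_X n) = n"
proof -
  let ?X = "[\<one>, \<zero>]" and ?U = "poly_ring R"
  interpret U: domain ?U by (rule univ_poly_is_domain[OF carrier_is_subring])
  have "degree (?X [^]\<^bsub>?U\<^esub> n) = n" "degree (\<ominus>\<^bsub>?U\<^esub> ?X) = 1"
    using polynomial_pow_degree[OF X_poly_closed, of n]
      univ_poly_a_inv_degree[OF carrier_is_subring X_poly_closed] by simp_all
  moreover have "polynomial (carrier R) (?X [^]\<^bsub>?U\<^esub> n)" "polynomial (carrier R) (\<ominus>\<^bsub>?U\<^esub> ?X)"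
    using X_poly_closed by (simp_all add: univ_poly_carrier)
  ultimately show ?thesis
    using poly_add_degree_eq[OF carrier_is_subring, of "?X [^]\<^bsub>?U\<^esub> n" "\<ominus>\<^bsub>?U\<^esub> ?X"] assms
    by (simp add: X_pow_minus_X_def a_minus_def univ_poly_add)
qed

lemma X_pow_minus_X_translate:
  fixes p :: nat
  assumes "prime p" and "[p] \<cdot> \<one> = \<zero>" and a: "a \<in> carrier R" "a [^] (p ^ m) = a"
  shows "X_pow_minus_X (p ^ m)
    = [\<one>, \<ominus> a] [^]\<^bsub>poly_ring R\<^esub> (p ^ m) \<ominus>\<^bsub>poly_ring R\<^esub> [\<one>, \<ominus> a]"
proof -
  let ?X = "[\<one>, \<zero>]" and ?U = "poly_ring R" and ?C = "poly_of_const a"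
  interpret U: domain ?U by (rule univ_poly_is_domain[OF carrier_is_subring])
  interpret H: ring_hom_ring R ?U poly_of_const
    using canonical_embedding_ring_hom[OF carrier_is_subring] by simp
  have C: "?C \<in> carrier ?U" using a by simp
  have Y: "[\<one>, \<ominus> a] = ?X \<ominus>\<^bsub>?U\<^esub> ?C"
    using a univ_poly_a_inv_def'[OF carrier_is_subring C]
    by (cases "a = \<zero>") (simp_all add: a_minus_def univ_poly_add poly_of_const_def)
  have "?C [^]\<^bsub>?U\<^esub> (p ^ m) = ?C" using H.hom_nat_pow[OF a(1), of "p ^ m", symmetric] a(2) by simp
  then have pow: "(?X \<ominus>\<^bsub>?U\<^esub> ?C) [^]\<^bsub>?U\<^esub> (p ^ m) = ?X [^]\<^bsub>?U\<^esub> (p ^ m) \<ominus>\<^bsub>?U\<^esub> ?C"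
    using U.frobenius_pow_diff[OF assms(1) poly_ring_char[OF assms(2)] X_poly_closed C] by simp
  have "(?X [^]\<^bsub>?U\<^esub> (p ^ m) \<ominus>\<^bsub>?U\<^esub> ?C) \<ominus>\<^bsub>?U\<^esub> (?X \<ominus>\<^bsub>?U\<^esub> ?C)
      = ?X [^]\<^bsub>?U\<^esub> (p ^ m) \<ominus>\<^bsub>?U\<^esub> ?X"
    using X_poly_closed C U.nat_pow_closed[OF X_poly_closed] by algebra
  then show ?thesis
    unfolding Y X_pow_minus_X_def pow by simp
qed

(* A double root a of X^q - X = (X - a)^q - (X - a) would make X - a divide (X - a)^(q-1) - 1,
   which takes the value -1 at a. *)
lemma count_roots_X_pow_minus_X:
  fixes p :: nat
  assumes "prime p" and "[p] \<cdot> \<one> = \<zero>" and "m \<ge> 1"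
  shows "count (roots (X_pow_minus_X (p ^ m))) a \<le> 1"
proof (rule ccontr)
  let ?P = "X_pow_minus_X (p ^ m)" and ?U = "poly_ring R" and ?Y = "[\<one>, \<ominus> a]"
  interpret U: domain ?U by (rule univ_poly_is_domain[OF carrier_is_subring])
  assume "\<not> count (roots ?P) a \<le> 1"
  then have mult: "2 \<le> alg_mult ?P a"
    using alg_mult_eq_count_roots[OF X_pow_minus_X_closed] by simp
  then have "0 < alg_mult ?P a" by simp
  then have "is_root ?P a"
    by (simp add: alg_mult_gt_zero_iff_is_root[OF X_pow_minus_X_closed])
  then have a: "a \<in> carrier R" "a [^] (p ^ m) = a"
    using eval_X_pow_minus_X by (auto simp: is_root_def)
  obtain Q where Q: "Q \<in> carrier ?U" "?P = ?Y [^]\<^bsub>?U\<^esub> (2::nat) \<otimes>\<^bsub>?U\<^esub> Q"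
    using le_alg_mult_imp_pdivides[OF a(1) X_pow_minus_X_closed mult]
    by (auto simp: pdivides_def factor_def)
  have Y: "?Y \<in> carrier ?U" "?Y \<noteq> \<zero>\<^bsub>?U\<^esub>"
    using a(1) by (auto simp: univ_poly_carrier[symmetric] polynomial_def univ_poly_zero)
  define k where "k = p ^ m - 1"
  have k: "p ^ m = Suc k" "k \<ge> 1"
    using prime_power_ge_2[OF assms(1,3)] by (simp_all add: k_def)
  have "eval ?Y a = \<zero>" using a(1) by (simp add: r_neg)
  then have "?Y [^]\<^bsub>?U\<^esub> (2::nat) \<otimes>\<^bsub>?U\<^esub> Q \<noteq> ?Y [^]\<^bsub>?U\<^esub> Suc k \<ominus>\<^bsub>?U\<^esub> ?Y"
    using U.square_not_dvd_pow_minus_self[OF Y Q(1) k(2) eval_ring_hom[OF carrier_is_subring a(1)]]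
    by simp
  then show False
    using X_pow_minus_X_translate[OF assms(1,2) a] Q(2) k(1) by simp
qed

end

lemma (in algebraically_closed) card_pow_fixed:
  fixes p :: nat
  assumes "prime p" and "[p] \<cdot> \<one> = \<zero>" and "m \<ge> 1"
  shows "card (pow_fixed L (p ^ m)) = p ^ m"
proof -
  let ?P = "X_pow_minus_X (p ^ m)"
  have "p ^ m \<ge> 2" using prime_power_ge_2[OF assms(1,3)] .
  then have deg: "degree ?P = p ^ m" by (rule degree_X_pow_minus_X)
  have "?P \<noteq> []"
  proof
    assume "?P = []"
    then have "degree ?P = 0" by simp
    then show False using deg \<open>p ^ m \<ge> 2\<close> by linarith
  qed
  have "set_mset (roots ?P) = pow_fixed L (p ^ m)"
    using roots_mem_iff_is_root[OF X_pow_minus_X_closed] eval_X_pow_minus_X \<open>?P \<noteq> []\<close>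
    by (auto simp: is_root_def pow_fixed_def)
  moreover have "size (roots ?P) = p ^ m"
    using roots_over_carrier[OF X_pow_minus_X_closed] deg by (simp add: splitted_def)
  ultimately show ?thesis
    using size_eq_card_set_mset[of "roots ?P"] count_roots_X_pow_minus_X[OF assms] by simp
qed

lemma (in residues) res_add_pow_one: "[(n::nat)] \<cdot> \<one> = int n mod m"
  by (induction n) (simp_all add: add.nat_pow_Suc res_zero_eq res_add_eq res_one_eq mod_add_right_eq add.commute)

(* The element type is that of the algebraic closure built by HOL-Algebra's alg_closure. *)
lemma exists_algebraically_closed_field_of_char:
  fixes p :: nat
  assumes "prime p"
  shows "\<exists>L :: ((int list \<times> nat) multiset \<Rightarrow> int) ring.
           algebraically_closed L \<and> [p] \<cdot>\<^bsub>L\<^esub> \<one>\<^bsub>L\<^esub> = \<zero>\<^bsub>L\<^esub>"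
proof -
  interpret R: residues_prime p "residue_ring (int p)" by unfold_locales (rule assms)
  let ?K = "R.indexed_const ` carrier (residue_ring (int p))"
  obtain L :: "((int list \<times> nat) multiset \<Rightarrow> int) ring"
    where "algebraic_closure L ?K" and hom: "R.indexed_const \<in> ring_hom (residue_ring (int p)) L"
    using R.alg_closureE by blast
  then interpret L: algebraic_closure L ?K by simp
  have "ring_hom_ring (residue_ring (int p)) L R.indexed_const"
    using hom R.ring_axioms L.ring_axioms by (intro ring_hom_ringI2)
  then have "[p] \<cdot>\<^bsub>L\<^esub> \<one>\<^bsub>L\<^esub> = R.indexed_const ([p] \<cdot>\<^bsub>residue_ring (int p)\<^esub> \<one>\<^bsub>residue_ring (int p)\<^esub>)"
    by (simp add: ring_hom_add_pow_one)
  also have "\<dots> = \<zero>\<^bsub>L\<^esub>"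
    using ring_hom_zero[OF hom R.ring_axioms L.ring_axioms] by (simp add: R.res_add_pow_one R.res_zero_eq)
  finally show ?thesis using L.algebraically_closed_axioms by blast
qed

section \<open>Affine lines\<close>

(* E plays the role of GF(v), a vector space over its subfield F = GF(k); the blocks are the
   affine lines x + F d with d \<noteq> 0. *)
locale affine_lines = domain L for L (structure) +
  fixes E F :: "'a set"
  assumes subring_E: "subring E L" and subfield_F: "subfield F L"
    and F_subset_E: "F \<subseteq> E" and finite_E: "finite E"
begin

definition line :: "'a \<Rightarrow> 'a \<Rightarrow> 'a set" where
  "line x d = (\<lambda>t. x \<oplus> t \<otimes> d) ` F"

definition lines :: "'a set set" where
  "lines = {line x d | x d. x \<in> E \<and> d \<in> E - {\<zero>}}"

definition parallel_class :: "'a \<Rightarrow> 'a set set" where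
  "parallel_class d = (\<lambda>x. line x d) ` E"

lemma E_closed:
  "\<And>x. x \<in> E \<Longrightarrow> x \<in> carrier L" "\<And>x y. x \<in> E \<Longrightarrow> y \<in> E \<Longrightarrow> x \<oplus> y \<in> E"
  "\<And>x y. x \<in> E \<Longrightarrow> y \<in> E \<Longrightarrow> x \<otimes> y \<in> E" "\<And>x y. x \<in> E \<Longrightarrow> y \<in> E \<Longrightarrow> x \<ominus> y \<in> E"
  using subringE[OF subring_E] by (auto simp: a_minus_def)

lemma F_closed:
  "\<And>x. x \<in> F \<Longrightarrow> x \<in> carrier L" "\<zero> \<in> F" "\<one> \<in> F" "\<And>x y. x \<in> F \<Longrightarrow> y \<in> F \<Longrightarrow> x \<oplus> y \<in> F"
  "\<And>x y. x \<in> F \<Longrightarrow> y \<in> F \<Longrightarrow> x \<otimes> y \<in> F" "\<And>x y. x \<in> F \<Longrightarrow> y \<in> F \<Longrightarrow> x \<ominus> y \<in> F"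
  using subringE[OF subfieldE(1)[OF subfield_F]] by (auto simp: a_minus_def)

lemma line_subset: "x \<in> E \<Longrightarrow> d \<in> E \<Longrightarrow> line x d \<subseteq> E"
  using F_subset_E E_closed by (auto simp: line_def)

lemma card_line:
  assumes "x \<in> E" "d \<in> E" "d \<noteq> \<zero>"
  shows "card (line x d) = card F"
proof -
  have "inj_on (\<lambda>t. x \<oplus> t \<otimes> d) F"
  proof (rule inj_onI)
    fix s t assume st: "s \<in> F" "t \<in> F" "x \<oplus> s \<otimes> d = x \<oplus> t \<otimes> d"
    have "x \<in> carrier L" "d \<in> carrier L" "s \<in> carrier L" "t \<in> carrier L"
      using assms st E_closed(1) F_closed(1) by auto
    then show "s = t" using st(3) m_rcancel[of d s t] assms(3) by simp
  qed
  then show ?thesis by (simp add: line_def card_image)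
qed

lemma line_base: "x \<in> E \<Longrightarrow> d \<in> E \<Longrightarrow> x \<in> line x d"
  unfolding line_def using F_closed(2) E_closed(1) by (intro image_eqI[of _ _ \<zero>]) simp_all

lemma line_step: "x \<in> E \<Longrightarrow> d \<in> E \<Longrightarrow> x \<oplus> d \<in> line x d"
  unfolding line_def using F_closed(3) E_closed(1) by (intro image_eqI[of _ _ \<one>]) simp_all

lemma line_eqI:
  assumes "\<And>t. t \<in> F \<Longrightarrow> \<exists>s\<in>F. x \<oplus> t \<otimes> d = y \<oplus> s \<otimes> e"
    and "\<And>s. s \<in> F \<Longrightarrow> \<exists>t\<in>F. y \<oplus> s \<otimes> e = x \<oplus> t \<otimes> d"
  shows "line x d = line y e"
proof (intro equalityI subsetI)
  fix z assume "z \<in> line x d"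
  then obtain t where "t \<in> F" "z = x \<oplus> t \<otimes> d" unfolding line_def by blast
  then obtain s where "s \<in> F" "z = y \<oplus> s \<otimes> e" using assms(1) by blast
  then show "z \<in> line y e" unfolding line_def by blast
next
  fix z assume "z \<in> line y e"
  then obtain s where "s \<in> F" "z = y \<oplus> s \<otimes> e" unfolding line_def by blast
  then obtain t where "t \<in> F" "z = x \<oplus> t \<otimes> d" using assms(2) by blast
  then show "z \<in> line x d" unfolding line_def by blast
qed

lemma line_translate:
  assumes "x \<in> E" "d \<in> E" "y \<in> line x d"
  shows "line y d = line x d"
proof (rule line_eqI)
  obtain s where s: "s \<in> F" "y = x \<oplus> s \<otimes> d" using assms(3) by (auto simp: line_def)
  have c: "x \<in> carrier L" "d \<in> carrier L" "s \<in> carrier L"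
    using assms s E_closed(1) F_closed(1) by auto
  show "\<exists>r\<in>F. y \<oplus> t \<otimes> d = x \<oplus> r \<otimes> d" if "t \<in> F" for t
  proof
    show "y \<oplus> t \<otimes> d = x \<oplus> (s \<oplus> t) \<otimes> d" using F_closed(1)[OF that] s c by algebra
  qed (use that s F_closed(4) in blast)
  show "\<exists>r\<in>F. x \<oplus> t \<otimes> d = y \<oplus> r \<otimes> d" if "t \<in> F" for t
  proof
    show "x \<oplus> t \<otimes> d = y \<oplus> (t \<ominus> s) \<otimes> d" using F_closed(1)[OF that] s c by algebra
  qed (use that s F_closed(6) in blast)
qed

lemma line_rescale:
  assumes "x \<in> E" "d \<in> E" "u \<in> F" "u \<noteq> \<zero>"
  shows "line x (u \<otimes> d) = line x d"
proof (rule line_eqI)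
  obtain v where v: "v \<in> F" "v \<otimes> u = \<one>"
    using subfield_m_inv[OF subfield_F, of u] assms(3,4) by blast
  have c: "x \<in> carrier L" "d \<in> carrier L" "u \<in> carrier L" "v \<in> carrier L"
    using assms v E_closed(1) F_closed(1) by auto
  show "\<exists>r\<in>F. x \<oplus> t \<otimes> (u \<otimes> d) = x \<oplus> r \<otimes> d" if "t \<in> F" for t
  proof
    show "x \<oplus> t \<otimes> (u \<otimes> d) = x \<oplus> (t \<otimes> u) \<otimes> d" using F_closed(1)[OF that] c by (simp add: m_assoc)
  qed (use that assms(3) F_closed(5) in blast)
  show "\<exists>r\<in>F. x \<oplus> t \<otimes> d = x \<oplus> r \<otimes> (u \<otimes> d)" if "t \<in> F" for t
  proof
    have "(t \<otimes> v) \<otimes> (u \<otimes> d) = t \<otimes> ((v \<otimes> u) \<otimes> d)"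
      using F_closed(1)[OF that] c by (simp add: m_assoc)
    then show "x \<oplus> t \<otimes> d = x \<oplus> (t \<otimes> v) \<otimes> (u \<otimes> d)" using v(2) c by simp
  qed (use that v(1) F_closed(5) in blast)
qed

lemma line_direction:
  assumes "x \<in> E" "d \<in> E" "y \<in> line x d" "z \<in> line x d" "y \<noteq> z"
  obtains u where "u \<in> F" "u \<noteq> \<zero>" "z \<ominus> y = u \<otimes> d"
proof -
  obtain s t where st: "s \<in> F" "y = x \<oplus> s \<otimes> d" "t \<in> F" "z = x \<oplus> t \<otimes> d"
    using assms(3,4) unfolding line_def by blast
  have c: "x \<in> carrier L" "d \<in> carrier L" "s \<in> carrier L" "t \<in> carrier L"
    using assms(1,2) st E_closed(1) F_closed(1) by auto
  have "z \<ominus> y = (t \<ominus> s) \<otimes> d" using st c by algebra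
  moreover have "t \<ominus> s \<noteq> \<zero>" using assms(5) st c by auto
  ultimately show ?thesis using that F_closed(6) st by blast
qed

lemma line_through_two_points:
  assumes "x \<in> E" "d \<in> E" "y \<in> line x d" "z \<in> line x d" "y \<noteq> z"
  shows "line x d = line y (z \<ominus> y)"
proof -
  obtain u where u: "u \<in> F" "u \<noteq> \<zero>" "z \<ominus> y = u \<otimes> d"
    using line_direction[OF assms] .
  have "y \<in> E" using line_subset[OF assms(1,2)] assms(3) by blast
  then show ?thesis
    using line_translate[OF assms(1-3)] line_rescale[OF _ assms(2) u(1,2)] u(3) by simp
qed

lemma bibd_lines: "bibd E lines (card E) (card F) 1"
  unfolding bibd_def
proof (intro conjI ballI impI)
  show "finite E" "card E = card E" by (simp_all add: finite_E)
next
  fix b assume "b \<in> lines"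
  then obtain x d where b: "b = line x d" "x \<in> E" "d \<in> E" "d \<noteq> \<zero>"
    unfolding lines_def by blast
  then show "b \<subseteq> E" "card b = card F" using line_subset card_line by simp_all
next
  fix y z assume yz: "y \<in> E" "z \<in> E" "y \<noteq> z"
  have zy: "z \<ominus> y \<in> E" "z \<ominus> y \<noteq> \<zero>" using yz E_closed by auto
  have "y \<oplus> (z \<ominus> y) = z" using yz E_closed(1) by algebra
  then have on_line: "y \<in> line y (z \<ominus> y)" "z \<in> line y (z \<ominus> y)"
    using line_base[OF yz(1) zy(1)] line_step[OF yz(1) zy(1)] by simp_all
  have "{b \<in> lines. y \<in> b \<and> z \<in> b} = {line y (z \<ominus> y)}"
  proof (intro equalityI subsetI)
    fix b assume "b \<in> {b \<in> lines. y \<in> b \<and> z \<in> b}"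
    then obtain x d where "b = line x d" "x \<in> E" "d \<in> E" "y \<in> b" "z \<in> b"
      unfolding lines_def by blast
    then show "b \<in> {line y (z \<ominus> y)}" using line_through_two_points yz(3) by simp
  next
    fix b assume "b \<in> {line y (z \<ominus> y)}"
    then show "b \<in> {b \<in> lines. y \<in> b \<and> z \<in> b}"
      using on_line yz(1) zy unfolding lines_def by blast
  qed
  then show "card {b \<in> lines. y \<in> b \<and> z \<in> b} = 1" by simp
qed

lemma parallel_class_eq:
  assumes "x \<in> E" "d \<in> E" "d \<noteq> \<zero>" "x' \<in> E" "d' \<in> E" "line x d = line x' d'"
  shows "parallel_class d = parallel_class d'"
proof -
  have "x \<in> line x' d'" "x \<oplus> d \<in> line x' d'" "x \<noteq> x \<oplus> d"
    using line_base[OF assms(1,2)] line_step[OF assms(1,2)] assms(1-3,6) E_closed(1) by auto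
  then obtain u where u: "u \<in> F" "u \<noteq> \<zero>" "(x \<oplus> d) \<ominus> x = u \<otimes> d'"
    using line_direction[OF assms(4,5)] by blast
  have "(x \<oplus> d) \<ominus> x = d" using assms(1,2) E_closed(1) by algebra
  then have "line w d = line w d'" if "w \<in> E" for w
    using line_rescale[OF that assms(5) u(1,2)] u(3) by simp
  then show ?thesis unfolding parallel_class_def by (rule image_cong[OF refl])
qed

lemma partitions_points_parallel_class:
  assumes "d \<in> E"
  shows "partitions_points E (parallel_class d)"
  unfolding partitions_points_def
proof (intro conjI ballI)
  show "c \<subseteq> E" if "c \<in> parallel_class d" for c
  proof -
    from that obtain x where "c = line x d" "x \<in> E" unfolding parallel_class_def by (rule imageE)
    then show ?thesis using line_subset assms by simp
  qed
  fix y assume y: "y \<in> E"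
  show "\<exists>!c. c \<in> parallel_class d \<and> y \<in> c"
  proof (rule ex1I[of _ "line y d"])
    show "line y d \<in> parallel_class d \<and> y \<in> line y d"
      using y assms line_base unfolding parallel_class_def by simp
    fix c assume c: "c \<in> parallel_class d \<and> y \<in> c"
    then obtain x where x: "c = line x d" "x \<in> E" unfolding parallel_class_def by blast
    then show "c = line y d" using line_translate[OF x(2) assms] c by simp
  qed
qed

lemma resolvable_lines: "resolvable E lines"
  unfolding resolvable_def
proof (intro exI[of _ "parallel_class ` (E - {\<zero>})"] conjI ballI)
  fix C assume "C \<in> parallel_class ` (E - {\<zero>})"
  then obtain d where d: "C = parallel_class d" "d \<in> E" "d \<noteq> \<zero>" by blast
  then show "C \<subseteq> lines" unfolding parallel_class_def lines_def by blast
  show "partitions_points E C" using d partitions_points_parallel_class by simp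
next
  fix b assume "b \<in> lines"
  then obtain x d where b: "b = line x d" "x \<in> E" "d \<in> E" "d \<noteq> \<zero>"
    unfolding lines_def by blast
  show "\<exists>!C. C \<in> parallel_class ` (E - {\<zero>}) \<and> b \<in> C"
  proof (rule ex1I[of _ "parallel_class d"])
    show "parallel_class d \<in> parallel_class ` (E - {\<zero>}) \<and> b \<in> parallel_class d"
      using b unfolding parallel_class_def by blast
    fix C assume "C \<in> parallel_class ` (E - {\<zero>}) \<and> b \<in> C"
    then obtain d' where d': "C = parallel_class d'" "d' \<in> E" "b \<in> parallel_class d'" by blast
    then obtain x' where "x' \<in> E" "b = line x' d'" unfolding parallel_class_def by blast
    then show "C = parallel_class d" using parallel_class_eq[OF b(2-4)] b(1) d'(1,2) by simp
  qed
qed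

lemma rbibd_lines: "rbibd E lines (card E) (card F) 1"
  using bibd_lines resolvable_lines by (simp add: rbibd_def)

end

lemma exists_rbibd_prime_power:
  fixes p a c :: nat
  assumes "prime p" and "a \<ge> 1" and "c \<ge> 1" and "c dvd a"
  shows "\<exists>(X :: nat set) B. rbibd X B (p ^ a) (p ^ c) 1"
proof -
  obtain L :: "((int list \<times> nat) multiset \<Rightarrow> int) ring"
    where "algebraically_closed L" and char: "[p] \<cdot>\<^bsub>L\<^esub> \<one>\<^bsub>L\<^esub> = \<zero>\<^bsub>L\<^esub>"
    using exists_algebraically_closed_field_of_char[OF assms(1)] by blast
  then interpret L: algebraically_closed L by simp
  let ?E = "pow_fixed L (p ^ a)" and ?F = "pow_fixed L (p ^ c)"
  have card: "card ?E = p ^ a" "card ?F = p ^ c"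
    using L.card_pow_fixed[OF assms(1) char] assms(2,3) by simp_all
  have "finite ?E" using card(1) prime_gt_0_nat[OF assms(1)] by (intro card_ge_0_finite) simp
  moreover obtain j where "a = c * j" using assms(4) by blast
  then have "?F \<subseteq> ?E" using L.pow_fixed_subset_power[of "p ^ c" j] by (simp add: power_mult)
  ultimately interpret A: affine_lines L ?E ?F
    using L.subfield_pow_fixed[OF assms(1) char] subfieldE(1)[OF L.subfield_pow_fixed[OF assms(1) char]]
    by (simp add: affine_lines_def affine_lines_axioms_def L.domain_axioms)
  obtain f :: "_ \<Rightarrow> nat" where "inj_on f ?E"
    using finite_imp_inj_to_nat_seg[OF \<open>finite ?E\<close>] by blast
  then have "rbibd (f ` ?E) (image f ` A.lines) (p ^ a) (p ^ c) 1"
    using rbibd_image A.rbibd_lines card by simp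
  then show ?thesis by blast
qed

theorem theorem3:
  fixes p a c v k :: nat
  assumes "prime p"
    and "v = p ^ a" and "a \<ge> 1"
    and "k = p ^ c" and "k \<ge> 2"
  shows "(\<exists>(X :: nat set) (B :: nat set set). rbibd X B v k 1)
         \<longleftrightarrow> (v - 1) mod (k - 1) = 0 \<and> v mod k = 0"
proof
  assume "\<exists>(X :: nat set) (B :: nat set set). rbibd X B v k 1"
  moreover have "v \<ge> 2" using prime_power_ge_2[OF assms(1,3)] assms(2) by simp
  ultimately show "(v - 1) mod (k - 1) = 0 \<and> v mod k = 0"
    using rbibd_necessary_conditions by blast
next
  assume "(v - 1) mod (k - 1) = 0 \<and> v mod k = 0"
  moreover have "c \<ge> 1" using assms(4,5) by (cases c) auto
  ultimately have "c dvd a"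
    using power_minus_one_dvd_imp_dvd[of p c a] prime_ge_2_nat[OF assms(1)] assms(2,4)
    by (simp add: mod_eq_0_iff_dvd)
  then show "\<exists>(X :: nat set) (B :: nat set set). rbibd X B v k 1"
    using exists_rbibd_prime_power[OF assms(1,3) \<open>c \<ge> 1\<close>] assms(2,4) by simp
qed

end
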